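(* Let $X$ be a Tychonoff space. The following are equivalent: (1) $C_\gamma(X)$ is $\aleph_0$-bounded; (2) $C_m(X)$ is $\aleph_0$-bounded; (3) $C_u(X)$ is $\aleph_0$-bounded; (4) $C_u(X)$ is separable; (5) $X$ is compact and metrizable; (6) $C_\gamma(X)$ is second countable; (7) $C_\gamma(X)$ has a countable network; (8) $C_\gamma(X)$ is separable; (9) $C_\gamma(X)$ is ccc; (10) $C_m(X)$ is separable; (11) $C_m(X)$ is Lindelöf; (12) $C_m(X)$ is ccc.
   Context: $C(X)$ is the set of continuous real-valued functions on a Tychonoff space $X$, a topological group under pointwise addition with identity the zero function. $C_u(X)$: topology of uniform convergence, basic neighborhoods of $f$ are $\{g:|g(x)-f(x)|<\varepsilon\ \forall x\in X\}$, $\varepsilon>0$. $C_m(X)$: $m$-topology, basic neighborhoods $\{g:|g(x)-f(x)|<\varepsilon(x)\ \forall x\in X\}$ with $\varepsilon\in C(X)$ strictly positive. $C_\gamma(X)$: graph topology, basic neighborhoods $\{g:|g(x)-f(x)|<\eta(x)\ \forall x\in X\}$ with $\eta$ a strictly positive lower semicontinuous real-valued function on $X$. A topological group $G$ with identity $e$ is $\aleph_0$-bounded if for each neighborhood $U$ of $e$ there is a countable $A\subset G$ with $G=A\cdot U$. ccc means every family of pairwise disjoint nonempty open sets is countable. *)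

theory Defs
  imports "HOL-Analysis.Analysis"
begin

definition Tychonoff_space :: "'a topology \<Rightarrow> bool" where
  "Tychonoff_space X \<longleftrightarrow> completely_regular_space X \<and> Hausdorff_space X"

text \<open>C(X): continuous real functions on X, normalised to 0 outside topspace X
  (so that a function on the carrier is a unique HOL function).\<close>
definition CX :: "'a topology \<Rightarrow> ('a \<Rightarrow> real) set" where
  "CX X = {f. continuous_map X euclideanreal f \<and> (\<forall>x. x \<notin> topspace X \<longrightarrow> f x = 0)}"

definition strip :: "'a topology \<Rightarrow> ('a \<Rightarrow> real) \<Rightarrow> ('a \<Rightarrow> real) \<Rightarrow> ('a \<Rightarrow> real) set" where
  "strip X f e = {g \<in> CX X. \<forall>x\<in>topspace X. \<bar>g x - f x\<bar> < e x}"

definition lower_semicont :: "'a topology \<Rightarrow> ('a \<Rightarrow> real) \<Rightarrow> bool" where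
  "lower_semicont X h \<longleftrightarrow> (\<forall>t. openin X {x \<in> topspace X. t < h x})"

definition Cu :: "'a topology \<Rightarrow> ('a \<Rightarrow> real) topology" where
  "Cu X = topology_generated_by {strip X f (\<lambda>_. \<epsilon>) | f \<epsilon>. f \<in> CX X \<and> \<epsilon> > 0}"

definition Cm :: "'a topology \<Rightarrow> ('a \<Rightarrow> real) topology" where
  "Cm X = topology_generated_by {strip X f \<epsilon> | f \<epsilon>. f \<in> CX X \<and>
      continuous_map X euclideanreal \<epsilon> \<and> (\<forall>x\<in>topspace X. \<epsilon> x > 0)}"

definition Cgamma :: "'a topology \<Rightarrow> ('a \<Rightarrow> real) topology" where
  "Cgamma X = topology_generated_by {strip X f \<eta> | f \<eta>. f \<in> CX X \<and>
      lower_semicont X \<eta> \<and> (\<forall>x\<in>topspace X. \<eta> x > 0)}"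

definition aleph0_bounded :: "'a topology \<Rightarrow> ('a \<Rightarrow> real) topology \<Rightarrow> bool" where
  "aleph0_bounded X T \<longleftrightarrow>
     (\<forall>U. openin T U \<and> (\<lambda>_. 0) \<in> U \<longrightarrow>
        (\<exists>A. countable A \<and> A \<subseteq> CX X \<and> CX X = {(\<lambda>x. a x + u x) | a u. a \<in> A \<and> u \<in> U}))"

definition ccc_space :: "'b topology \<Rightarrow> bool" where
  "ccc_space T \<longleftrightarrow> (\<forall>\<U>. (\<forall>U\<in>\<U>. openin T U \<and> U \<noteq> {}) \<and> pairwise disjnt \<U> \<longrightarrow> countable \<U>)"

definition network :: "'b topology \<Rightarrow> 'b set set \<Rightarrow> bool" where
  "network T \<N> \<longleftrightarrow> (\<forall>N\<in>\<N>. N \<subseteq> topspace T) \<and>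
     (\<forall>U x. openin T U \<and> x \<in> U \<longrightarrow> (\<exists>N\<in>\<N>. x \<in> N \<and> N \<subseteq> U))"

definition countable_network :: "'b topology \<Rightarrow> bool" where
  "countable_network T \<longleftrightarrow> (\<exists>\<N>. countable \<N> \<and> network T \<N>)"

end

theory Submission
  imports Defs
begin

text \<open>
  All twelve conditions are equivalent to \<^emph>\<open>uniform separability\<close> of \<open>C(X)\<close>: a countable set
  of continuous functions approximating every continuous function uniformly to within every
  \<open>\<epsilon> > 0\<close>. Since \<open>C\<^sub>u \<subseteq> C\<^sub>m \<subseteq> C\<^sub>\<gamma>\<close>, each of \<open>\<aleph>\<^sub>0\<close>-boundedness, separability, ccc and the
  Lindelof property passes from \<open>C\<^sub>m\<close> or \<open>C\<^sub>\<gamma>\<close> down to \<open>C\<^sub>u\<close>, where it produces countable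
  \<open>\<epsilon>\<close>-nets of uniform strips.

  A uniformly dense sequence \<open>(u\<^sub>n)\<close> separates points from closed sets of a Tychonoff space, so
  \<open>x \<mapsto> (u\<^sub>n x)\<^sub>n\<close> embeds \<open>X\<close> into \<open>\<real>\<^sup>\<nat>\<close> and \<open>X\<close> is metrizable. It is also compact: by
  Tietze's theorem an infinite closed discrete set would carry a continuous function equal to
  \<open>u\<^sub>n + 1\<close> at its \<open>n\<close>-th point. Conversely, on a compact metric space the infimal convolutions
  of finitely many cones with rational heights, integer slopes and apexes in finite nets are
  uniformly dense.

  Finally, on a compact space every positive lower semicontinuous function is bounded away
  from \<open>0\<close>, so \<open>C\<^sub>\<gamma>\<close>, \<open>C\<^sub>m\<close> and \<open>C\<^sub>u\<close> coincide, and the uniform strips of radius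
  \<open>1/(n+1)\<close> around a countable uniformly dense set form a countable base.
\<close>

abbreviation uball :: "'a topology \<Rightarrow> ('a \<Rightarrow> real) \<Rightarrow> real \<Rightarrow> ('a \<Rightarrow> real) set" where
  "uball X f r \<equiv> strip X f (\<lambda>_. r)"

definition uniformly_separable :: "'a topology \<Rightarrow> bool" where
  "uniformly_separable X \<longleftrightarrow>
     (\<exists>D \<subseteq> CX X. countable D \<and> (\<forall>r>0. CX X \<subseteq> (\<Union>d\<in>D. uball X d r)))"

section \<open>Continuous functions and uniform strips\<close>

lemma CX_zero [simp]: "(\<lambda>_. 0) \<in> CX X"
  by (simp add: CX_def)

lemma CX_add: "f \<in> CX X \<Longrightarrow> g \<in> CX X \<Longrightarrow> (\<lambda>x. f x + g x) \<in> CX X"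
  by (auto simp: CX_def intro!: continuous_intros)

lemma CX_diff: "f \<in> CX X \<Longrightarrow> g \<in> CX X \<Longrightarrow> (\<lambda>x. f x - g x) \<in> CX X"
  by (auto simp: CX_def intro!: continuous_intros)

lemma CX_restrict:
  "continuous_map X euclideanreal f \<Longrightarrow> (\<lambda>x. if x \<in> topspace X then f x else 0) \<in> CX X"
  unfolding CX_def by (auto intro: continuous_map_eq)

lemma strip_subset_CX: "strip X f e \<subseteq> CX X"
  by (auto simp: strip_def)

lemma centre_in_uball: "f \<in> CX X \<Longrightarrow> 0 < r \<Longrightarrow> f \<in> uball X f r"
  by (simp add: strip_def)

lemma uball_sym: "f \<in> CX X \<Longrightarrow> g \<in> uball X f r \<Longrightarrow> f \<in> uball X g r"
  by (auto simp: strip_def abs_minus_commute)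

lemma uball_subset_uball:
  "g \<in> uball X f r \<Longrightarrow> r + s \<le> t \<Longrightarrow> uball X g s \<subseteq> uball X f t"
  by (force simp: strip_def)

lemma uball_mono: "r \<le> s \<Longrightarrow> uball X f r \<subseteq> uball X f s"
  by (auto simp: strip_def)

lemma uniformly_separableI:
  assumes "\<And>r. 0 < r \<Longrightarrow> \<exists>A\<subseteq>CX X. countable A \<and> CX X \<subseteq> (\<Union>a\<in>A. uball X a r)"
  shows "uniformly_separable X"
proof -
  have "\<forall>n. \<exists>A\<subseteq>CX X. countable A \<and> CX X \<subseteq> (\<Union>a\<in>A. uball X a (inverse (real (Suc n))))"
    using assms by simp
  then obtain A where A: "\<And>n. A n \<subseteq> CX X" "\<And>n. countable (A n)"
    "\<And>n. CX X \<subseteq> (\<Union>a\<in>A n. uball X a (inverse (real (Suc n))))"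
    by metis
  show ?thesis
    unfolding uniformly_separable_def
  proof (intro exI[of _ "\<Union>n. A n"] conjI allI impI)
    show "(\<Union>n. A n) \<subseteq> CX X" "countable (\<Union>n. A n)"
      using A(1,2) by auto
    fix r :: real assume "0 < r"
    then obtain n where n: "inverse (real (Suc n)) < r"
      using reals_Archimedean by blast
    show "CX X \<subseteq> (\<Union>d\<in>\<Union>n. A n. uball X d r)"
    proof
      fix f assume "f \<in> CX X"
      with A(3) obtain a where "a \<in> A n" "f \<in> uball X a (inverse (real (Suc n)))"
        by blast
      moreover have "uball X a (inverse (real (Suc n))) \<subseteq> uball X a r"
        using n by (simp add: uball_mono)
      ultimately show "f \<in> (\<Union>d\<in>\<Union>n. A n. uball X d r)" by blast
    qed
  qed
qed

lemma uniformly_separable_topspace_empty: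
  assumes "topspace X = {}"
  shows "uniformly_separable X"
  unfolding uniformly_separable_def
proof (intro exI[of _ "{\<lambda>_. 0}"] conjI allI impI)
  fix r :: real assume "0 < r"
  then show "CX X \<subseteq> (\<Union>d\<in>{\<lambda>_. 0}. uball X d r)"
    using assms by (auto simp: strip_def)
qed auto

lemma uniformly_separable_dense_sequence:
  assumes "uniformly_separable X"
  obtains u :: "nat \<Rightarrow> 'a \<Rightarrow> real"
  where "\<And>n. u n \<in> CX X" "\<And>f r. f \<in> CX X \<Longrightarrow> 0 < r \<Longrightarrow> \<exists>n. f \<in> uball X (u n) r"
proof -
  obtain D where D: "D \<subseteq> CX X" "countable D" "\<And>r. 0 < r \<Longrightarrow> CX X \<subseteq> (\<Union>d\<in>D. uball X d r)"
    using assms unfolding uniformly_separable_def by blast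
  have "(\<lambda>_. 0) \<in> (\<Union>d\<in>D. uball X d 1)"
    using subsetD[OF D(3)[OF zero_less_one] CX_zero] .
  then have "D \<noteq> {}" by blast
  show thesis
  proof
    show "from_nat_into D n \<in> CX X" for n
      using from_nat_into[OF \<open>D \<noteq> {}\<close>] D(1) by blast
    fix f and r :: real assume "f \<in> CX X" "0 < r"
    then obtain d where "d \<in> D" "f \<in> uball X d r"
      using D(3) by blast
    then show "\<exists>n. f \<in> uball X (from_nat_into D n) r"
      using from_nat_into_surj[OF D(2)] by metis
  qed
qed

section \<open>Lower semicontinuous functions\<close>

lemma continuous_map_imp_lower_semicont:
  "continuous_map X euclideanreal h \<Longrightarrow> lower_semicont X h"
  by (simp add: lower_semicont_def continuous_map_upper_lower_semicontinuous_lt)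

lemma lower_semicont_const: "lower_semicont X (\<lambda>_. c)"
  by (rule continuous_map_imp_lower_semicont) simp

lemma lower_semicont_diff:
  assumes "lower_semicont X h" "continuous_map X euclideanreal c"
  shows "lower_semicont X (\<lambda>x. h x - c x)"
  unfolding lower_semicont_def
proof
  fix t
  have eq: "{x \<in> topspace X. t < h x - c x} =
     (\<Union>s. {x \<in> topspace X. s < h x} \<inter> {x \<in> topspace X. c x < s - t})"
    (is "?L = ?R")
  proof
    show "?L \<subseteq> ?R"
    proof
      fix x assume x: "x \<in> ?L"
      define s where "s = (h x + t + c x) / 2"
      have "s < h x" "c x < s - t"
        using x by (simp_all add: s_def field_simps)
      with x show "x \<in> ?R" by blast
    qed
  qed auto
  have "openin X {x \<in> topspace X. c x < u}" for u
    using openin_continuous_map_preimage[OF assms(2), of "{..<u}"] by simp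
  then have "openin X ({x \<in> topspace X. s < h x} \<inter> {x \<in> topspace X. c x < s - t})" for s
    using assms(1) by (simp add: lower_semicont_def openin_Int)
  then show "openin X {x \<in> topspace X. t < h x - c x}"
    unfolding eq by (intro openin_Union) blast
qed

lemma compact_space_lower_semicont_pos_bound:
  assumes "compact_space X" "lower_semicont X h" "\<And>x. x \<in> topspace X \<Longrightarrow> 0 < h x"
  obtains \<delta> where "0 < \<delta>" "\<And>x. x \<in> topspace X \<Longrightarrow> \<delta> < h x"
proof -
  define W where "W n = {x \<in> topspace X. 1 / (real n + 1) < h x}" for n :: nat
  have "topspace X \<subseteq> \<Union>(range W)"
  proof
    fix x assume x: "x \<in> topspace X"
    then obtain n where "inverse (real (Suc n)) < h x"
      using assms(3) reals_Archimedean by blast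
    with x have "x \<in> W n" by (simp add: W_def inverse_eq_divide add.commute)
    then show "x \<in> \<Union>(range W)" by blast
  qed
  moreover have "openin X (W n)" for n
    using assms(2) by (simp add: W_def lower_semicont_def)
  ultimately obtain F where F: "finite F" "F \<subseteq> range W" "topspace X \<subseteq> \<Union>F"
    using assms(1) unfolding compact_space_alt by (metis rangeE)
  then obtain N where N: "finite N" "topspace X \<subseteq> (\<Union>n\<in>N. W n)"
    using finite_subset_image[OF F(1,2)] by blast
  define m where "m = Max (insert 0 N)"
  show thesis
  proof
    show "0 < 1 / (real m + 1)" by simp
    fix x assume "x \<in> topspace X"
    then obtain n where "n \<in> N" "x \<in> W n" using N by auto
    moreover from this have "1 / (real m + 1) \<le> 1 / (real n + 1)"
      using N(1) by (simp add: m_def frac_le)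
    ultimately show "1 / (real m + 1) < h x" by (simp add: W_def)
  qed
qed

section \<open>The topologies \<open>C\<^sub>u\<close>, \<open>C\<^sub>m\<close> and \<open>C\<^sub>\<gamma>\<close>\<close>

lemma openin_topology_generated_by_coarsest:
  assumes "openin (topology_generated_by \<S>) U" "\<And>S. S \<in> \<S> \<Longrightarrow> openin T S"
  shows "openin T U"
  using generate_topology_on_coarsest[of "openin T" \<S> U] assms
  by (simp add: openin_topology_generated_by_iff)

lemma topspace_topology_generated_by_strips:
  assumes "\<And>S. S \<in> \<S> \<Longrightarrow> S \<subseteq> CX X" "\<And>f. f \<in> CX X \<Longrightarrow> uball X f 1 \<in> \<S>"
  shows "topspace (topology_generated_by \<S>) = CX X"
proof (simp only: topology_generated_by_topspace, rule equalityI)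
  show "\<Union>\<S> \<subseteq> CX X" using assms(1) by blast
  show "CX X \<subseteq> \<Union>\<S>" using assms(2) centre_in_uball[OF _ zero_less_one] by blast
qed

lemma topspace_Cu [simp]: "topspace (Cu X) = CX X"
  unfolding Cu_def
  by (rule topspace_topology_generated_by_strips) (use strip_subset_CX zero_less_one in blast)+

lemma topspace_Cm [simp]: "topspace (Cm X) = CX X"
  unfolding Cm_def
  by (rule topspace_topology_generated_by_strips) (use strip_subset_CX in blast, force)

lemma topspace_Cgamma [simp]: "topspace (Cgamma X) = CX X"
  unfolding Cgamma_def
  by (rule topspace_topology_generated_by_strips)
     (use strip_subset_CX zero_less_one lower_semicont_const in blast)+

lemma openin_Cu_uball: "f \<in> CX X \<Longrightarrow> 0 < r \<Longrightarrow> openin (Cu X) (uball X f r)"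
  unfolding Cu_def by (rule topology_generated_by_Basis) blast

lemma openin_Cu_imp_openin_Cm: "openin (Cu X) U \<Longrightarrow> openin (Cm X) U"
  unfolding Cu_def
  by (erule openin_topology_generated_by_coarsest) (force simp: Cm_def intro: topology_generated_by_Basis)

lemma openin_Cm_imp_openin_Cgamma: "openin (Cm X) U \<Longrightarrow> openin (Cgamma X) U"
  unfolding Cm_def
  by (erule openin_topology_generated_by_coarsest)
     (force simp: Cgamma_def intro: topology_generated_by_Basis continuous_map_imp_lower_semicont)

lemma openin_Cu_imp_openin_Cgamma: "openin (Cu X) U \<Longrightarrow> openin (Cgamma X) U"
  by (intro openin_Cm_imp_openin_Cgamma openin_Cu_imp_openin_Cm)

lemma uball_subset_strip_lower_semicont:
  assumes "compact_space X" "f \<in> CX X" "lower_semicont X \<eta>" "g \<in> strip X f \<eta>"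
  obtains \<delta> where "0 < \<delta>" "uball X g \<delta> \<subseteq> strip X f \<eta>"
proof -
  have g: "g \<in> CX X" and gap: "\<And>x. x \<in> topspace X \<Longrightarrow> 0 < \<eta> x - \<bar>g x - f x\<bar>"
    using assms(4) by (auto simp: strip_def)
  have "continuous_map X euclideanreal (\<lambda>x. \<bar>g x - f x\<bar>)"
    using g assms(2) by (auto simp: CX_def intro!: continuous_intros)
  with assms(3) have "lower_semicont X (\<lambda>x. \<eta> x - \<bar>g x - f x\<bar>)"
    by (rule lower_semicont_diff)
  then obtain \<delta> where \<delta>: "0 < \<delta>" "\<And>x. x \<in> topspace X \<Longrightarrow> \<delta> < \<eta> x - \<bar>g x - f x\<bar>"
    using compact_space_lower_semicont_pos_bound[OF assms(1), of "\<lambda>x. \<eta> x - \<bar>g x - f x\<bar>"] gap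
    by blast
  have "uball X g \<delta> \<subseteq> strip X f \<eta>"
  proof
    fix h assume h: "h \<in> uball X g \<delta>"
    have "\<bar>h x - f x\<bar> < \<eta> x" if "x \<in> topspace X" for x
    proof -
      have "\<bar>h x - g x\<bar> < \<delta>" using h that by (simp add: strip_def)
      with \<delta>(2)[OF that] show ?thesis by arith
    qed
    with h show "h \<in> strip X f \<eta>" by (simp add: strip_def)
  qed
  with \<delta>(1) show thesis ..
qed

text \<open>Compactness is essential: as the strips are defined by a pointwise strict inequality,
  a uniform strip need not contain a uniform strip around each of its points.\<close>
lemma openin_Cu_imp_uball_subset:
  assumes "compact_space X" "openin (Cu X) U" "g \<in> U"
  obtains r where "0 < r" "uball X g r \<subseteq> U"
proof -
  have "generate_topology_on {uball X f \<epsilon> |f \<epsilon>. f \<in> CX X \<and> 0 < \<epsilon>} U"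
    using assms(2) unfolding Cu_def openin_topology_generated_by_iff .
  then have "\<forall>g\<in>U. \<exists>r>0. uball X g r \<subseteq> U"
  proof induction
    case (Int a b)
    show ?case
    proof
      fix g assume "g \<in> a \<inter> b"
      with Int.IH obtain r s where "0 < r" "uball X g r \<subseteq> a" "0 < s" "uball X g s \<subseteq> b"
        by blast
      moreover have "uball X g (min r s) \<subseteq> uball X g r" "uball X g (min r s) \<subseteq> uball X g s"
        by (simp_all add: uball_mono)
      ultimately have "uball X g (min r s) \<subseteq> a \<inter> b" "0 < min r s"
        by auto
      then show "\<exists>t>0. uball X g t \<subseteq> a \<inter> b" by blast
    qed
  next
    case (Basis s)
    then obtain f \<epsilon> where s: "s = uball X f \<epsilon>" "f \<in> CX X" by blast
    show ?case
    proof
      fix g assume "g \<in> s"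
      then obtain \<delta> where "0 < \<delta>" "uball X g \<delta> \<subseteq> uball X f \<epsilon>"
        unfolding s(1) by (rule uball_subset_strip_lower_semicont[OF assms(1) s(2) lower_semicont_const])
      with s(1) show "\<exists>r>0. uball X g r \<subseteq> s" by blast
    qed
  next
    case (UN K)
    show ?case
    proof
      fix g assume "g \<in> \<Union>K"
      then obtain k where "k \<in> K" "g \<in> k" by blast
      with UN.IH obtain r where "0 < r" "uball X g r \<subseteq> k" by blast
      with \<open>k \<in> K\<close> show "\<exists>r>0. uball X g r \<subseteq> \<Union>K" by blast
    qed
  qed simp
  with assms(3) show thesis
    using that by blast
qed

lemma openin_Cu_compact_space:
  assumes "compact_space X"
  shows "openin (Cu X) U \<longleftrightarrow> U \<subseteq> CX X \<and> (\<forall>g\<in>U. \<exists>r>0. uball X g r \<subseteq> U)"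
proof
  assume U: "openin (Cu X) U"
  have "U \<subseteq> CX X"
    using openin_subset[OF U] by simp
  moreover have "\<exists>r>0. uball X g r \<subseteq> U" if "g \<in> U" for g
    using openin_Cu_imp_uball_subset[OF assms U that] by blast
  ultimately show "U \<subseteq> CX X \<and> (\<forall>g\<in>U. \<exists>r>0. uball X g r \<subseteq> U)" by blast
next
  assume U: "U \<subseteq> CX X \<and> (\<forall>g\<in>U. \<exists>r>0. uball X g r \<subseteq> U)"
  show "openin (Cu X) U"
  proof (subst openin_subopen, intro ballI)
    fix g assume "g \<in> U"
    with U obtain r where r: "0 < r" "uball X g r \<subseteq> U" and g: "g \<in> CX X" by blast
    have "openin (Cu X) (uball X g r)" "g \<in> uball X g r"
      using openin_Cu_uball[OF g r(1)] centre_in_uball[OF g r(1)] .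
    with r(2) show "\<exists>T. openin (Cu X) T \<and> g \<in> T \<and> T \<subseteq> U" by blast
  qed
qed

lemma Cgamma_eq_Cu:
  assumes "compact_space X"
  shows "Cgamma X = Cu X"
proof (rule topology_eq[THEN iffD2], intro allI iffI)
  fix U assume "openin (Cgamma X) U"
  then show "openin (Cu X) U"
    unfolding Cgamma_def
  proof (rule openin_topology_generated_by_coarsest, elim CollectE exE conjE, hypsubst)
    fix f \<eta> assume f\<eta>: "f \<in> CX X" "lower_semicont X \<eta>"
    show "openin (Cu X) (strip X f \<eta>)"
      unfolding openin_Cu_compact_space[OF assms]
    proof (intro conjI strip_subset_CX ballI)
      fix g assume "g \<in> strip X f \<eta>"
      then obtain \<delta> where "0 < \<delta>" "uball X g \<delta> \<subseteq> strip X f \<eta>"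
        using uball_subset_strip_lower_semicont[OF assms f\<eta>] by blast
      then show "\<exists>r>0. uball X g r \<subseteq> strip X f \<eta>" by blast
    qed
  qed
qed (rule openin_Cu_imp_openin_Cgamma)

lemma Cm_eq_Cu:
  assumes "compact_space X"
  shows "Cm X = Cu X"
proof (rule topology_eq[THEN iffD2], intro allI iffI)
  fix U assume "openin (Cm X) U"
  then have "openin (Cgamma X) U" by (rule openin_Cm_imp_openin_Cgamma)
  then show "openin (Cu X) U" by (simp add: Cgamma_eq_Cu[OF assms])
qed (rule openin_Cu_imp_openin_Cm)

section \<open>Countability properties and coarser topologies\<close>

lemma continuous_map_id_coarser:
  assumes "topspace S = topspace T" "\<And>U. openin S U \<Longrightarrow> openin T U"
  shows "continuous_map T S id"
proof -
  have "{x \<in> topspace T. id x \<in> U} = U" if "openin S U" for U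
    using openin_subset[OF that] assms(1) by auto
  with assms show ?thesis
    by (simp add: continuous_map_def)
qed

lemma separable_space_coarser:
  assumes "topspace S = topspace T" "\<And>U. openin S U \<Longrightarrow> openin T U" "separable_space T"
  shows "separable_space S"
  using separable_space_continuous_map_image[OF assms(3) continuous_map_id_coarser[OF assms(1,2)]]
    assms(1) by simp

lemma Lindelof_space_coarser:
  assumes "topspace S = topspace T" "\<And>U. openin S U \<Longrightarrow> openin T U" "Lindelof_space T"
  shows "Lindelof_space S"
  using Lindelof_space_continuous_map_image[OF assms(3) continuous_map_id_coarser[OF assms(1,2)]]
    assms(1) by simp

lemma ccc_space_coarser:
  "(\<And>U. openin S U \<Longrightarrow> openin T U) \<Longrightarrow> ccc_space T \<Longrightarrow> ccc_space S"
  unfolding ccc_space_def by blast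

lemma aleph0_bounded_coarser:
  "(\<And>U. openin S U \<Longrightarrow> openin T U) \<Longrightarrow> aleph0_bounded X T \<Longrightarrow> aleph0_bounded X S"
  unfolding aleph0_bounded_def by blast

lemma separable_imp_ccc_space:
  assumes "separable_space T"
  shows "ccc_space T"
  unfolding ccc_space_def
proof (intro allI impI, elim conjE)
  fix \<U> assume \<U>: "\<forall>U\<in>\<U>. openin T U \<and> U \<noteq> {}" "pairwise disjnt \<U>"
  obtain C where C: "countable C" "C \<subseteq> topspace T" "T closure_of C = topspace T"
    using assms unfolding separable_space_def by blast
  have "\<forall>U\<in>\<U>. \<exists>c. c \<in> C \<and> c \<in> U"
  proof
    fix U assume "U \<in> \<U>"
    then obtain x where x: "x \<in> U" "openin T U" using \<U>(1) by blast
    then have "x \<in> T closure_of C" using C(3) openin_subset by blast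
    with x show "\<exists>c. c \<in> C \<and> c \<in> U" unfolding in_closure_of by blast
  qed
  then obtain c where c: "\<And>U. U \<in> \<U> \<Longrightarrow> c U \<in> C \<and> c U \<in> U" by metis
  have "inj_on c \<U>"
  proof (rule inj_onI, rule ccontr)
    fix U V assume UV: "U \<in> \<U>" "V \<in> \<U>" "c U = c V" "U \<noteq> V"
    then have "disjnt U V" using \<U>(2) unfolding pairwise_def by blast
    then show False using c[OF UV(1)] c[OF UV(2)] UV(3) unfolding disjnt_def by auto
  qed
  moreover have "c ` \<U> \<subseteq> C"
    using c by blast
  ultimately show "countable \<U>"
    using C(1) countable_subset countable_image_inj_on by blast
qed

lemma second_countable_imp_countable_network:
  assumes "second_countable T"
  shows "countable_network T"
proof -
  obtain \<B> where \<B>: "countable \<B>" "\<forall>V\<in>\<B>. openin T V"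
    "\<forall>U x. openin T U \<and> x \<in> U \<longrightarrow> (\<exists>V\<in>\<B>. x \<in> V \<and> V \<subseteq> U)"
    using assms unfolding second_countable_def by blast
  have "network T \<B>"
    unfolding network_def
  proof
    show "\<forall>N\<in>\<B>. N \<subseteq> topspace T"
      using \<B>(2) openin_subset by blast
  qed (fact \<B>(3))
  with \<B>(1) show ?thesis
    unfolding countable_network_def by blast
qed

lemma countable_network_imp_separable_space:
  assumes "countable_network T"
  shows "separable_space T"
proof -
  obtain \<N> where \<N>: "countable \<N>" "network T \<N>"
    using assms unfolding countable_network_def by blast
  define pick where "pick N = (SOME x. x \<in> N)" for N :: "'a set"
  define C where "C = pick ` (\<N> - {{}})"
  have pick: "pick N \<in> N" if "N \<noteq> {}" for N
    using that by (simp add: pick_def some_in_eq)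
  have "countable C"
    unfolding C_def using \<N>(1) by simp
  moreover have "C \<subseteq> topspace T"
  proof
    fix y assume "y \<in> C"
    then obtain N where "N \<in> \<N>" "N \<noteq> {}" "y = pick N"
      unfolding C_def by blast
    moreover have "N \<subseteq> topspace T"
      using \<N>(2) \<open>N \<in> \<N>\<close> unfolding network_def by blast
    ultimately show "y \<in> topspace T"
      using pick by blast
  qed
  moreover have "T closure_of C = topspace T"
  proof (rule equalityI[OF closure_of_subset_topspace], rule subsetI)
    fix x assume x: "x \<in> topspace T"
    show "x \<in> T closure_of C"
      unfolding in_closure_of
    proof (intro conjI allI impI x)
      fix U assume "x \<in> U \<and> openin T U"
      then obtain N where N: "N \<in> \<N>" "x \<in> N" "N \<subseteq> U"
        using \<N>(2) unfolding network_def by blast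
      then have "N \<noteq> {}" by blast
      with N(1) have "pick N \<in> C"
        unfolding C_def by blast
      moreover have "pick N \<in> U"
        using pick[OF \<open>N \<noteq> {}\<close>] N(3) by blast
      ultimately show "\<exists>y. y \<in> C \<and> y \<in> U" by blast
    qed
  qed
  ultimately show ?thesis
    unfolding separable_space_def by blast
qed

lemma exists_maximal_pairwise_subset:
  obtains M where "M \<subseteq> A" "pairwise R M" "\<And>x. x \<in> A \<Longrightarrow> x \<notin> M \<Longrightarrow> \<not> pairwise R (insert x M)"
proof -
  let ?P = "{M. M \<subseteq> A \<and> pairwise R M}"
  have "\<exists>M\<in>?P. \<forall>N\<in>?P. M \<subseteq> N \<longrightarrow> N = M"
  proof (rule subset_Zorn')
    fix \<C> assume \<C>: "subset.chain ?P \<C>"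
    then have sub: "\<And>S. S \<in> \<C> \<Longrightarrow> S \<subseteq> A \<and> pairwise R S"
      unfolding subset_chain_def by blast
    have "chain\<^sub>\<subseteq> \<C>"
      using \<C> unfolding subset_chain_def chain_subset_def by blast
    then have "pairwise R (\<Union>\<C>)"
      using pairwise_chain_Union sub by blast
    moreover have "\<Union>\<C> \<subseteq> A"
      using sub by blast
    ultimately show "\<Union>\<C> \<in> ?P" by blast
  qed
  then obtain M where "M \<in> ?P" and max: "\<forall>N\<in>?P. M \<subseteq> N \<longrightarrow> N = M" ..
  then have M: "M \<subseteq> A" "pairwise R M" by simp_all
  show thesis
  proof (rule that[OF M])
    fix x assume x: "x \<in> A" "x \<notin> M"
    show "\<not> pairwise R (insert x M)"
    proof
      assume "pairwise R (insert x M)"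
      with x(1) M(1) have "insert x M \<in> ?P" by blast
      then have "insert x M = M"
        using max by blast
      with x(2) show False by blast
    qed
  qed
qed

lemma ccc_space_countable_disjoint_neighbourhoods:
  assumes "ccc_space T" "\<And>a. a \<in> M \<Longrightarrow> openin T (B a) \<and> a \<in> B a"
    "pairwise (\<lambda>a b. disjnt (B a) (B b)) M"
  shows "countable M"
proof -
  have "inj_on B M"
  proof (rule inj_onI, rule ccontr)
    fix a b assume ab: "a \<in> M" "b \<in> M" "B a = B b" "a \<noteq> b"
    then have "disjnt (B a) (B b)"
      using assms(3) unfolding pairwise_def by blast
    moreover have "a \<in> B b"
      using assms(2)[OF ab(1)] ab(3) by simp
    ultimately show False
      using assms(2)[OF ab(1)] unfolding disjnt_def by blast
  qed
  moreover have "countable (B ` M)"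
  proof (rule assms(1)[unfolded ccc_space_def, rule_format], intro conjI ballI)
    fix U assume "U \<in> B ` M"
    then obtain a where "a \<in> M" "U = B a" by blast
    with assms(2) show "openin T U" "U \<noteq> {}" by auto
  next
    show "pairwise disjnt (B ` M)"
      unfolding pairwise_image using assms(3) unfolding pairwise_def by blast
  qed
  ultimately show ?thesis
    by (rule countable_image_inj_on[rotated])
qed

section \<open>Countability properties of \<open>C\<^sub>u\<close>\<close>

lemma separable_Cu_imp_uniformly_separable:
  assumes "separable_space (Cu X)"
  shows "uniformly_separable X"
proof -
  obtain C where C: "countable C" "C \<subseteq> CX X" "Cu X closure_of C = CX X"
    using assms unfolding separable_space_def by auto
  have "CX X \<subseteq> (\<Union>d\<in>C. uball X d r)" if r: "0 < r" for r
  proof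
    fix f assume f: "f \<in> CX X"
    then have "f \<in> Cu X closure_of C"
      using C(3) by simp
    then obtain d where "d \<in> C" "d \<in> uball X f r"
      using openin_Cu_uball[OF f r] centre_in_uball[OF f r] unfolding in_closure_of by blast
    then show "f \<in> (\<Union>d\<in>C. uball X d r)"
      using uball_sym[OF f] by blast
  qed
  with C(1,2) show ?thesis
    unfolding uniformly_separable_def by blast
qed

lemma Lindelof_Cu_imp_uniformly_separable:
  assumes "Lindelof_space (Cu X)"
  shows "uniformly_separable X"
proof (rule uniformly_separableI)
  fix r :: real assume r: "0 < r"
  have "\<forall>U\<in>(\<lambda>f. uball X f r) ` CX X. openin (Cu X) U"
    using openin_Cu_uball[OF _ r] by blast
  moreover have "topspace (Cu X) \<subseteq> \<Union>((\<lambda>f. uball X f r) ` CX X)"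
    using centre_in_uball[OF _ r] by auto
  ultimately obtain \<V> where \<V>: "countable \<V>" "\<V> \<subseteq> (\<lambda>f. uball X f r) ` CX X" "CX X \<subseteq> \<Union>\<V>"
    using assms unfolding Lindelof_space_alt by (metis topspace_Cu)
  then obtain A where "countable A" "A \<subseteq> CX X" "\<V> = (\<lambda>f. uball X f r) ` A"
    using countable_subset_image[THEN iffD1, OF conjI[OF \<V>(1,2)]] by blast
  with \<V>(3) show "\<exists>A\<subseteq>CX X. countable A \<and> CX X \<subseteq> (\<Union>a\<in>A. uball X a r)"
    by blast
qed

lemma aleph0_bounded_Cu_imp_uniformly_separable:
  assumes "aleph0_bounded X (Cu X)"
  shows "uniformly_separable X"
proof (rule uniformly_separableI)
  fix r :: real assume r: "0 < r"
  have "openin (Cu X) (uball X (\<lambda>_. 0) r) \<and> (\<lambda>_. 0) \<in> uball X (\<lambda>_. 0) r"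
    using openin_Cu_uball[OF CX_zero r] centre_in_uball[OF CX_zero r] ..
  from assms[unfolded aleph0_bounded_def, rule_format, OF this]
  obtain A where A: "countable A" "A \<subseteq> CX X"
    "CX X = {(\<lambda>x. a x + u x) | a u. a \<in> A \<and> u \<in> uball X (\<lambda>_. 0) r}"
    by (elim exE conjE)
  have "CX X \<subseteq> (\<Union>a\<in>A. uball X a r)"
  proof
    fix f assume f: "f \<in> CX X"
    then obtain a u where au: "f = (\<lambda>x. a x + u x)" "a \<in> A" "u \<in> uball X (\<lambda>_. 0) r"
      unfolding A(3) by blast
    with f have "f \<in> uball X a r"
      by (simp add: strip_def)
    with au(2) show "f \<in> (\<Union>a\<in>A. uball X a r)" by blast
  qed
  with A(1,2) show "\<exists>A\<subseteq>CX X. countable A \<and> CX X \<subseteq> (\<Union>a\<in>A. uball X a r)"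
    by blast
qed

text \<open>A maximal family of functions with pairwise disjoint uniform \<open>r/2\<close>-strips is an
  \<open>r\<close>-net.\<close>
lemma ccc_Cu_imp_uniformly_separable:
  assumes "ccc_space (Cu X)"
  shows "uniformly_separable X"
proof (rule uniformly_separableI)
  fix r :: real assume r: "0 < r"
  define B where "B f = uball X f (r / 2)" for f
  obtain M where M: "M \<subseteq> CX X" "pairwise (\<lambda>f g. disjnt (B f) (B g)) M"
    and max: "\<And>f. f \<in> CX X \<Longrightarrow> f \<notin> M \<Longrightarrow> \<not> pairwise (\<lambda>f g. disjnt (B f) (B g)) (insert f M)"
    by (rule exists_maximal_pairwise_subset[of "CX X" "\<lambda>f g. disjnt (B f) (B g)"]) blast
  have nbhd: "openin (Cu X) (B f) \<and> f \<in> B f" if "f \<in> M" for f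
  proof -
    have "f \<in> CX X" "0 < r / 2"
      using that M(1) r by auto
    then show ?thesis
      unfolding B_def using openin_Cu_uball centre_in_uball by blast
  qed
  have "countable M"
    using ccc_space_countable_disjoint_neighbourhoods[OF assms nbhd M(2)] .
  moreover have "CX X \<subseteq> (\<Union>a\<in>M. uball X a r)"
  proof
    fix f assume f: "f \<in> CX X"
    show "f \<in> (\<Union>a\<in>M. uball X a r)"
    proof (cases "f \<in> M")
      case True
      then show ?thesis using centre_in_uball[OF f r] by blast
    next
      case False
      have "\<not> (\<forall>g\<in>M. g \<noteq> f \<longrightarrow> disjnt (B f) (B g) \<and> disjnt (B g) (B f))"
        using max[OF f False] M(2) unfolding pairwise_insert by blast
      then obtain g where g: "g \<in> M" "\<not> disjnt (B g) (B f)"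
        by (auto simp: disjnt_commute)
      then obtain h where h: "h \<in> B g" "h \<in> B f"
        unfolding disjnt_def by blast
      have "f \<in> uball X h (r / 2)"
        using uball_sym[OF f] h(2) by (simp add: B_def)
      moreover have "uball X h (r / 2) \<subseteq> uball X g r"
        using h(1) by (intro uball_subset_uball) (simp_all add: B_def, linarith)
      ultimately show ?thesis
        using g(1) by blast
    qed
  qed
  ultimately show "\<exists>A\<subseteq>CX X. countable A \<and> CX X \<subseteq> (\<Union>a\<in>A. uball X a r)"
    using M(1) by blast
qed

lemma uniformly_separable_imp_second_countable_Cu:
  assumes "compact_space X" "uniformly_separable X"
  shows "second_countable (Cu X)"
proof -
  obtain D where D: "D \<subseteq> CX X" "countable D" "\<And>r. 0 < r \<Longrightarrow> CX X \<subseteq> (\<Union>d\<in>D. uball X d r)"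
    using assms(2) unfolding uniformly_separable_def by blast
  define \<B> where "\<B> = (\<lambda>(d, n). uball X d (inverse (real (Suc n)))) ` (D \<times> UNIV)"
  have "countable \<B>"
    unfolding \<B>_def using D(2) by simp
  moreover have "openin (Cu X) V" if "V \<in> \<B>" for V
    using that D(1) unfolding \<B>_def by (auto intro!: openin_Cu_uball)
  moreover have "\<exists>V\<in>\<B>. g \<in> V \<and> V \<subseteq> U" if U: "openin (Cu X) U" "g \<in> U" for U g
  proof -
    obtain r where r: "0 < r" "uball X g r \<subseteq> U"
      by (rule openin_Cu_imp_uball_subset[OF assms(1) U])
    obtain n where n: "inverse (real (Suc n)) < r / 2"
      using reals_Archimedean r(1) half_gt_zero by blast
    define e where "e = inverse (real (Suc n))"
    have g: "g \<in> CX X"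
      using U openin_subset by fastforce
    obtain d where d: "d \<in> D" "g \<in> uball X d e"
      using D(3)[of e] g by (force simp: e_def)
    have "uball X d e \<in> \<B>"
      using d(1) unfolding \<B>_def e_def by blast
    moreover have "uball X d e \<subseteq> uball X g r"
      using uball_sym[OF _ d(2)] D(1) d(1) n by (intro uball_subset_uball) (auto simp: e_def)
    ultimately show ?thesis
      using d(2) r(2) by blast
  qed
  ultimately show ?thesis
    unfolding second_countable_def by blast
qed

lemma uniformly_separable_imp_aleph0_bounded_Cu:
  assumes "compact_space X" "uniformly_separable X"
  shows "aleph0_bounded X (Cu X)"
  unfolding aleph0_bounded_def
proof (intro allI impI, elim conjE)
  fix U assume U: "openin (Cu X) U" "(\<lambda>_. 0) \<in> U"
  obtain r where r: "0 < r" "uball X (\<lambda>_. 0) r \<subseteq> U"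
    by (rule openin_Cu_imp_uball_subset[OF assms(1) U])
  obtain D where D: "D \<subseteq> CX X" "countable D" "\<And>r. 0 < r \<Longrightarrow> CX X \<subseteq> (\<Union>d\<in>D. uball X d r)"
    using assms(2) unfolding uniformly_separable_def by blast
  have "CX X = {(\<lambda>x. d x + u x) | d u. d \<in> D \<and> u \<in> U}"
  proof (rule equalityI; rule subsetI)
    fix f assume f: "f \<in> CX X"
    then obtain d where d: "d \<in> D" "f \<in> uball X d r"
      using D(3)[OF r(1)] by blast
    have "(\<lambda>x. f x - d x) \<in> uball X (\<lambda>_. 0) r"
      using d(2) CX_diff[OF f] D(1) d(1) by (auto simp: strip_def)
    with r(2) have "(\<lambda>x. f x - d x) \<in> U" by blast
    then show "f \<in> {(\<lambda>x. d x + u x) | d u. d \<in> D \<and> u \<in> U}"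
      using d(1) by (intro CollectI exI[of _ d] exI[of _ "\<lambda>x. f x - d x"]) simp
  next
    fix f assume "f \<in> {(\<lambda>x. d x + u x) | d u. d \<in> D \<and> u \<in> U}"
    then obtain d u where du: "f = (\<lambda>x. d x + u x)" "d \<in> D" "u \<in> U" by blast
    moreover have "u \<in> CX X"
      using du(3) openin_subset[OF U(1)] by auto
    ultimately show "f \<in> CX X"
      using CX_add D(1) by blast
  qed
  with D(1,2) show "\<exists>A. countable A \<and> A \<subseteq> CX X \<and> CX X = {(\<lambda>x. a x + u x) | a u. a \<in> A \<and> u \<in> U}"
    by (intro exI[of _ D] conjI)
qed

section \<open>Compact metric spaces are uniformly separable\<close>

lemma continuous_map_Min:
  assumes "finite K" "K \<noteq> {}" "\<And>c. c \<in> K \<Longrightarrow> continuous_map X euclideanreal (h c)"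
  shows "continuous_map X euclideanreal (\<lambda>x. Min ((\<lambda>c. h c x) ` K))"
  using assms
proof (induction K rule: finite_ne_induct)
  case (insert a K)
  have "(\<lambda>x. Min ((\<lambda>c. h c x) ` insert a K)) = (\<lambda>x. min (h a x) (Min ((\<lambda>c. h c x) ` K)))"
    using insert.hyps by (simp add: Min_insert)
  with insert show ?case
    by (simp add: continuous_map_real_min)
qed simp

lemma compact_space_bounded_real:
  assumes "compact_space X" "continuous_map X euclideanreal f"
  obtains B where "\<And>x. x \<in> topspace X \<Longrightarrow> \<bar>f x\<bar> \<le> B"
proof -
  have "compact (f ` topspace X)"
    using image_compactin[OF assms(1)[unfolded compact_space_def] assms(2)] by simp
  then show thesis
    using that compact_imp_bounded[of "f ` topspace X"] unfolding bounded_real by blast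
qed

lemma Rats_approx_PiE:
  fixes f :: "'a \<Rightarrow> real"
  assumes "0 < e"
  obtains q where "q \<in> K \<rightarrow>\<^sub>E \<rat>" "\<And>c. c \<in> K \<Longrightarrow> \<bar>q c - f c\<bar> < e"
proof -
  have "\<forall>c. \<exists>r. r \<in> \<rat> \<and> \<bar>r - f c\<bar> < e"
  proof
    fix c
    obtain r where "r \<in> \<rat>" "f c - e < r" "r < f c + e"
      using Rats_dense_in_real[of "f c - e" "f c + e"] assms by auto
    then show "\<exists>r. r \<in> \<rat> \<and> \<bar>r - f c\<bar> < e" by (intro exI[of _ r]) auto
  qed
  from choice[OF this] obtain q where q: "\<forall>c. q c \<in> \<rat> \<and> \<bar>q c - f c\<bar> < e" ..
  show thesis
    by (rule that[of "restrict q K"]) (use q in auto)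
qed

lemma (in Metric_space) compact_space_finite_net:
  assumes "compact_space mtopology" "0 < \<epsilon>"
  obtains K where "finite K" "K \<subseteq> M" "\<And>x. x \<in> M \<Longrightarrow> \<exists>c\<in>K. d x c < \<epsilon>"
proof -
  have "mtotally_bounded M"
    using assms(1) compact_space_eq_mcomplete_mtotally_bounded by blast
  from this[unfolded mtotally_bounded_def, rule_format, OF assms(2)]
  obtain K where K: "finite K" "K \<subseteq> M" "M \<subseteq> (\<Union>c\<in>K. mball c \<epsilon>)"
    by (elim exE conjE)
  have "\<exists>c\<in>K. d x c < \<epsilon>" if "x \<in> M" for x
  proof -
    from K(3) that obtain c where "c \<in> K" "x \<in> mball c \<epsilon>" by blast
    then show ?thesis using commute[of c x] by auto
  qed
  with K(1,2) show thesis using that by blast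
qed

lemma compact_mtopology_finite_nets:
  fixes m :: "'a metric"
  assumes "compact_space (mtopology_of m)"
  obtains F where "\<And>n. finite (F n)" "\<And>n. F n \<subseteq> mspace m"
    "\<And>n x. x \<in> mspace m \<Longrightarrow> \<exists>c\<in>F n. mdist m x c < inverse (real (Suc n))"
proof -
  have cpt: "compact_space (Metric_space.mtopology (mspace m) (mdist m))"
    using assms by (simp add: mtopology_of_def)
  have "\<exists>K. finite K \<and> K \<subseteq> mspace m \<and> (\<forall>x\<in>mspace m. \<exists>c\<in>K. mdist m x c < inverse (real (Suc n)))"
    for n
  proof -
    have "0 < inverse (real (Suc n))" by simp
    then obtain K where "finite K" "K \<subseteq> mspace m"
      "\<And>x. x \<in> mspace m \<Longrightarrow> \<exists>c\<in>K. mdist m x c < inverse (real (Suc n))"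
      by (rule Metric_space.compact_space_finite_net[OF Metric_space_mspace_mdist cpt]) blast
    then show ?thesis by blast
  qed
  then have "\<forall>n. \<exists>K. finite K \<and> K \<subseteq> mspace m \<and> (\<forall>x\<in>mspace m. \<exists>c\<in>K. mdist m x c < inverse (real (Suc n)))"
    by blast
  from choice[OF this] obtain F where "\<forall>n. finite (F n) \<and> F n \<subseteq> mspace m \<and>
      (\<forall>x\<in>mspace m. \<exists>c\<in>F n. mdist m x c < inverse (real (Suc n)))"
    by blast
  then show thesis
    using that by blast
qed

lemma continuous_map_inf_convolution:
  fixes m :: "'a metric"
  assumes "finite K" "K \<noteq> {}" "K \<subseteq> mspace m"
  shows "continuous_map (mtopology_of m) euclideanreal (\<lambda>x. Min ((\<lambda>c. q c + L * mdist m x c) ` K))"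
proof (rule continuous_map_Min[OF assms(1,2)])
  fix c assume "c \<in> K"
  with assms(3) have "continuous_map (mtopology_of m) euclideanreal (\<lambda>x. mdist m x c)"
    using continuous_map_mdist[of "mtopology_of m" m id "\<lambda>_. c"] by auto
  then show "continuous_map (mtopology_of m) euclideanreal (\<lambda>x. q c + L * mdist m x c)"
    by (intro continuous_map_add continuous_map_real_mult_left) simp_all
qed

text \<open>Cones with apex at distance at least \<open>\<delta>\<close> from \<open>x\<close> stay above \<open>f x\<close> because \<open>L \<delta>\<close>
  exceeds the oscillation \<open>2 B\<close> of \<open>f\<close>.\<close>
lemma inf_convolution_approx:
  fixes m :: "'a metric" and f q :: "'a \<Rightarrow> real"
  assumes K: "finite K" "K \<subseteq> mspace m" and x: "x \<in> mspace m"
    and bound: "\<And>y. y \<in> mspace m \<Longrightarrow> \<bar>f y\<bar> \<le> B"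
    and uc: "\<And>y. y \<in> mspace m \<Longrightarrow> mdist m y x < \<delta> \<Longrightarrow> \<bar>f y - f x\<bar> < e"
    and q: "\<And>c. c \<in> K \<Longrightarrow> \<bar>q c - f c\<bar> < e"
    and L: "0 \<le> L" "2 * B + e \<le> L * \<delta>"
    and c: "c \<in> K" "mdist m x c < \<eta>" "\<eta> \<le> \<delta>" "L * \<eta> \<le> e"
  shows "\<bar>f x - Min ((\<lambda>c. q c + L * mdist m x c) ` K)\<bar> < 3 * e"
proof -
  let ?S = "(\<lambda>c. q c + L * mdist m x c) ` K"
  have S: "finite ?S" "?S \<noteq> {}"
    using K(1) c(1) by auto
  have "Min ?S \<le> q c + L * mdist m x c"
    using S(1) c(1) by simp
  moreover have "L * mdist m x c \<le> e"
    using c(2,4) L(1) mult_left_mono[of "mdist m x c" \<eta> L] by linarith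
  moreover have "\<bar>f c - f x\<bar> < e"
    using uc[of c] c K(2) x by (auto simp: mdist_commute)
  ultimately have upper: "Min ?S < f x + 3 * e"
    using q[OF c(1)] by linarith
  obtain c' where c': "c' \<in> K" "Min ?S = q c' + L * mdist m x c'"
    using Min_in[OF S] by blast
  have lower: "f x - 3 * e < Min ?S"
  proof (cases "mdist m c' x < \<delta>")
    case True
    then have "\<bar>f c' - f x\<bar> < e"
      using uc c'(1) K(2) by blast
    moreover have "0 \<le> L * mdist m x c'"
      using L(1) by simp
    ultimately show ?thesis
      using c'(2) q[OF c'(1)] by linarith
  next
    case False
    then have "L * \<delta> \<le> L * mdist m x c'"
      using L(1) by (simp add: mdist_commute mult_left_mono)
    moreover have "\<bar>f c'\<bar> \<le> B" "\<bar>f x\<bar> \<le> B"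
      using bound c'(1) K(2) x by auto
    ultimately show ?thesis
      using c'(2) q[OF c'(1)] L(2) q[OF c(1)] by linarith
  qed
  from upper lower show ?thesis by linarith
qed


lemma exists_slope_and_mesh:
  fixes B e \<delta> :: real
  assumes "0 < e" "0 < \<delta>"
  obtains L n :: nat where "2 * B + e \<le> real L * \<delta>" "inverse (real (Suc n)) \<le> \<delta>"
    "real L * inverse (real (Suc n)) \<le> e"
proof -
  obtain L :: nat where L: "(2 * B + e) / \<delta> \<le> real L"
    using real_arch_simple by blast
  have "0 < min \<delta> (e / (real L + 1))"
    using assms by simp
  then obtain n where n: "inverse (real (Suc n)) < min \<delta> (e / (real L + 1))"
    using reals_Archimedean by blast
  have "real L * inverse (real (Suc n)) \<le> (real L + 1) * inverse (real (Suc n))"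
    by simp
  also have "\<dots> \<le> e"
    using n by (simp add: field_simps)
  finally have "real L * inverse (real (Suc n)) \<le> e" .
  moreover have "2 * B + e \<le> real L * \<delta>"
    using L assms(2) by (simp add: field_simps)
  ultimately show thesis
    using that[of L n] n by simp
qed

lemma inf_convolution_uniform_approx:
  fixes m :: "'a metric"
  assumes "compact_space (mtopology_of m)" "f \<in> CX (mtopology_of m)" "0 < \<epsilon>"
    and F: "\<And>n. finite (F n)" "\<And>n. F n \<subseteq> mspace m"
      "\<And>n x. x \<in> mspace m \<Longrightarrow> \<exists>c\<in>F n. mdist m x c < inverse (real (Suc n))"
  shows "\<exists>n L. \<exists>q\<in>F n \<rightarrow>\<^sub>E \<rat>.
           \<forall>x\<in>mspace m. \<bar>f x - Min ((\<lambda>c. q c + real L * mdist m x c) ` F n)\<bar> < \<epsilon>"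
proof -
  define e where "e = \<epsilon> / 3"
  have e: "0 < e"
    using assms(3) by (simp add: e_def)
  have fc: "continuous_map (mtopology_of m) euclideanreal f"
    using assms(2) by (simp add: CX_def)
  obtain B where B: "\<And>y. y \<in> mspace m \<Longrightarrow> \<bar>f y\<bar> \<le> B"
    using compact_space_bounded_real[OF assms(1) fc] by auto
  have "uniformly_continuous_map m euclidean_metric f"
    using assms(1) fc by (simp add: continuous_imp_uniformly_continuous_map)
  then obtain \<delta> where \<delta>: "0 < \<delta>"
    "\<forall>x\<in>mspace m. \<forall>y\<in>mspace m. mdist m y x < \<delta> \<longrightarrow> dist (f y) (f x) < e"
    using e unfolding uniformly_continuous_map_def mdist_euclidean_metric by blast
  have uc: "\<bar>f y - f x\<bar> < e" if "x \<in> mspace m" "y \<in> mspace m" "mdist m y x < \<delta>" for x y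
    using \<delta>(2) that by (simp add: dist_real_def)
  obtain L n :: nat where L: "2 * B + e \<le> real L * \<delta>"
    and n: "inverse (real (Suc n)) \<le> \<delta>" "real L * inverse (real (Suc n)) \<le> e"
    using exists_slope_and_mesh[OF e \<delta>(1), of B] by blast
  obtain q where q: "q \<in> F n \<rightarrow>\<^sub>E \<rat>" "\<And>c. c \<in> F n \<Longrightarrow> \<bar>q c - f c\<bar> < e"
    using Rats_approx_PiE[OF e] by blast
  have "\<bar>f x - Min ((\<lambda>c. q c + real L * mdist m x c) ` F n)\<bar> < \<epsilon>" if x: "x \<in> mspace m" for x
  proof -
    obtain c where c: "c \<in> F n" "mdist m x c < inverse (real (Suc n))"
      using F(3)[OF x] by blast
    have "\<bar>f x - Min ((\<lambda>c. q c + real L * mdist m x c) ` F n)\<bar> < 3 * e"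
      by (rule inf_convolution_approx[where \<delta> = \<delta> and B = B and c = c and \<eta> = "inverse (real (Suc n))"])
         (fact F(1,2) x B uc[OF x] q(2) L c n | simp)+
    then show ?thesis
      by (simp add: e_def)
  qed
  with q(1) show ?thesis
    by blast
qed

lemma compact_mtopology_imp_uniformly_separable:
  fixes m :: "'a metric"
  assumes "compact_space (mtopology_of m)"
  shows "uniformly_separable (mtopology_of m)"
proof (cases "mspace m = {}")
  case True
  then show ?thesis by (simp add: uniformly_separable_topspace_empty)
next
  case False
  obtain F where F: "\<And>n. finite (F n)" "\<And>n. F n \<subseteq> mspace m"
    "\<And>n x. x \<in> mspace m \<Longrightarrow> \<exists>c\<in>F n. mdist m x c < inverse (real (Suc n))"
    by (rule compact_mtopology_finite_nets[OF assms]) blast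
  have F_ne: "F n \<noteq> {}" for n
    using F(3) False by blast
  define G where "G n L q x = (if x \<in> mspace m then Min ((\<lambda>c. q c + real L * mdist m x c) ` F n) else 0)"
    for n L :: nat and q :: "'a \<Rightarrow> real" and x
  have G: "G n L q \<in> CX (mtopology_of m)" for n L q
    using CX_restrict[OF continuous_map_inf_convolution[OF F(1) F_ne F(2), where q = q and L = "real L"]]
    unfolding G_def by simp
  define D where "D = (\<Union>n L. G n L ` (F n \<rightarrow>\<^sub>E \<rat>))"
  show ?thesis
    unfolding uniformly_separable_def
  proof (intro exI[of _ D] conjI allI impI)
    show "D \<subseteq> CX (mtopology_of m)"
      unfolding D_def using G by blast
    have "countable (F n \<rightarrow>\<^sub>E \<rat>)" for n
      by (rule countable_PiE) (simp_all add: F(1) countable_rat)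
    then show "countable D"
      unfolding D_def by (intro countable_UN countable_image) auto
    fix \<epsilon> :: real assume \<epsilon>: "0 < \<epsilon>"
    show "CX (mtopology_of m) \<subseteq> (\<Union>d\<in>D. uball (mtopology_of m) d \<epsilon>)"
    proof
      fix f assume f: "f \<in> CX (mtopology_of m)"
      from inf_convolution_uniform_approx[OF assms f \<epsilon> F]
      obtain n L q where "q \<in> F n \<rightarrow>\<^sub>E \<rat>"
        "\<forall>x\<in>mspace m. \<bar>f x - Min ((\<lambda>c. q c + real L * mdist m x c) ` F n)\<bar> < \<epsilon>"
        by blast
      moreover from this(2) have "f \<in> uball (mtopology_of m) (G n L q) \<epsilon>"
        using f by (simp add: strip_def G_def)
      ultimately show "f \<in> (\<Union>d\<in>D. uball (mtopology_of m) d \<epsilon>)"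
        unfolding D_def by blast
    qed
  qed
qed

section \<open>Uniformly separable Tychonoff spaces are compact and metrizable\<close>

lemma separating_sequence_inj_on:
  fixes f :: "nat \<Rightarrow> 'a \<Rightarrow> real"
  assumes "t1_space X"
    and sep: "\<And>W x. openin X W \<Longrightarrow> x \<in> W \<Longrightarrow>
                \<exists>n V. open V \<and> f n x \<in> V \<and> {y \<in> topspace X. f n y \<in> V} \<subseteq> W"
  shows "inj_on (\<lambda>x n. f n x) (topspace X)"
proof (rule inj_onI, rule ccontr)
  fix x y assume xy: "x \<in> topspace X" "y \<in> topspace X" "(\<lambda>n. f n x) = (\<lambda>n. f n y)" "x \<noteq> y"
  have "openin X (topspace X - {y})"
    using \<open>t1_space X\<close> openin_topspace unfolding t1_space_openin_delete_alt by blast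
  moreover have "x \<in> topspace X - {y}"
    using xy(1,4) by blast
  ultimately have "\<exists>n V. open V \<and> f n x \<in> V \<and> {z \<in> topspace X. f n z \<in> V} \<subseteq> topspace X - {y}"
    by (rule sep)
  then obtain n V where V: "f n x \<in> V" "{z \<in> topspace X. f n z \<in> V} \<subseteq> topspace X - {y}"
    by blast
  moreover have "f n y = f n x"
    using fun_cong[OF xy(3), of n] by simp
  ultimately have "y \<in> {z \<in> topspace X. f n z \<in> V}"
    using xy(2) by simp
  with V(2) show False by blast
qed

lemma separating_sequence_open_map:
  fixes f :: "nat \<Rightarrow> 'a \<Rightarrow> real"
  assumes sep: "\<And>W x. openin X W \<Longrightarrow> x \<in> W \<Longrightarrow>
                \<exists>n V. open V \<and> f n x \<in> V \<and> {y \<in> topspace X. f n y \<in> V} \<subseteq> W"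
  shows "open_map X (subtopology euclidean ((\<lambda>x n. f n x) ` topspace X)) (\<lambda>x n. f n x)"
    (is "open_map X (subtopology euclidean ?S) ?e")
  unfolding open_map_def
proof (intro allI impI)
  fix W assume W: "openin X W"
  show "openin (subtopology euclidean ?S) (?e ` W)"
  proof (subst openin_subopen, intro ballI)
    fix p assume "p \<in> ?e ` W"
    then obtain x where x: "x \<in> W" "p = ?e x" by blast
    from sep[OF W x(1)] obtain n V where V: "open V" "f n x \<in> V" "{y \<in> topspace X. f n y \<in> V} \<subseteq> W"
      by (elim exE conjE)
    define P where "P = {q :: nat \<Rightarrow> real. q n \<in> V}"
    have "open P"
      unfolding P_def using open_vimage[OF V(1) continuous_on_product_coordinates[of n]]
      by (simp add: vimage_def)
    then have "openin (subtopology euclidean ?S) (P \<inter> ?S)"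
      by (intro openin_subtopology_Int) simp
    moreover have "p \<in> P \<inter> ?S"
    proof
      show "p \<in> P" using V(2) by (simp add: P_def x(2))
      show "p \<in> ?S" using x openin_subset[OF W] by blast
    qed
    moreover have "P \<inter> ?S \<subseteq> ?e ` W"
    proof
      fix q assume "q \<in> P \<inter> ?S"
      then obtain y where y: "y \<in> topspace X" "q = ?e y" "f n y \<in> V"
        unfolding P_def by auto
      with V(3) show "q \<in> ?e ` W" by blast
    qed
    ultimately show "\<exists>T. openin (subtopology euclidean ?S) T \<and> p \<in> T \<and> T \<subseteq> ?e ` W"
      by blast
  qed
qed

lemma separating_sequence_imp_metrizable_space:
  fixes f :: "nat \<Rightarrow> 'a \<Rightarrow> real"
  assumes "t1_space X" and cont: "\<And>n. continuous_map X euclideanreal (f n)"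
    and sep: "\<And>W x. openin X W \<Longrightarrow> x \<in> W \<Longrightarrow>
                \<exists>n V. open V \<and> f n x \<in> V \<and> {y \<in> topspace X. f n y \<in> V} \<subseteq> W"
  shows "metrizable_space X"
proof -
  let ?e = "\<lambda>x n. f n x" and ?S = "(\<lambda>x n. f n x) ` topspace X"
  have "continuous_map X euclidean ?e"
    unfolding euclidean_product_topology[symmetric] continuous_map_componentwise_UNIV
    using cont by blast
  then have "continuous_map X (subtopology euclidean ?S) ?e"
    unfolding continuous_map_in_subtopology by blast
  then have "homeomorphic_map X (subtopology euclidean ?S) ?e"
    using separating_sequence_inj_on[OF assms(1) sep] separating_sequence_open_map[OF sep]
    by (intro bijective_open_imp_homeomorphic_map) simp_all
  then have "X homeomorphic_space subtopology euclidean ?S"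
    by (rule homeomorphic_map_imp_homeomorphic_space)
  then show ?thesis
    using homeomorphic_metrizable_space metrizable_space_subtopology metrizable_space_euclidean by blast
qed

lemma completely_regular_dense_sequence_separates:
  assumes "completely_regular_space X"
    and u: "\<And>f r. f \<in> CX X \<Longrightarrow> 0 < r \<Longrightarrow> \<exists>n. f \<in> uball X (u n) r"
    and W: "openin X W" "x \<in> W"
  shows "\<exists>n V. open V \<and> u n x \<in> V \<and> {y \<in> topspace X. u n y \<in> V} \<subseteq> W"
proof -
  have closed: "closedin X (topspace X - W)"
    using W(1) by (simp add: closedin_diff)
  have x: "x \<in> topspace X"
    using W openin_subset by blast
  with W(2) have "x \<in> topspace X - (topspace X - W)"
    by blast
  from assms(1)[unfolded completely_regular_space_def, rule_format, OF conjI[OF closed this]]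
  have "\<exists>\<phi>. continuous_map X (top_of_set {0..1::real}) \<phi> \<and> \<phi> x = 0 \<and> \<phi> ` (topspace X - W) \<subseteq> {1}" .
  then obtain \<phi> where \<phi>: "continuous_map X (top_of_set {0..1::real}) \<phi>" "\<phi> x = 0"
    "\<phi> ` (topspace X - W) \<subseteq> {1}"
    by blast
  have "continuous_map X euclideanreal \<phi>"
    using \<phi>(1) by (simp add: continuous_map_in_subtopology)
  define \<phi>' where "\<phi>' y = (if y \<in> topspace X then \<phi> y else 0)" for y
  have "\<phi>' \<in> CX X"
    unfolding \<phi>'_def by (rule CX_restrict) fact
  then have "\<exists>n. \<phi>' \<in> uball X (u n) (1 / 3)"
    by (rule u) simp
  then obtain n where "\<phi>' \<in> uball X (u n) (1 / 3)" ..
  then have n: "\<And>z. z \<in> topspace X \<Longrightarrow> \<bar>\<phi> z - u n z\<bar> < 1 / 3"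
    by (simp add: strip_def \<phi>'_def)
  have "{y \<in> topspace X. u n y \<in> ball (u n x) (1 / 3)} \<subseteq> W"
  proof
    fix y assume y: "y \<in> {y \<in> topspace X. u n y \<in> ball (u n x) (1 / 3)}"
    then have "\<bar>u n y - u n x\<bar> < 1 / 3"
      by (simp add: dist_real_def abs_minus_commute)
    moreover have "\<bar>\<phi> x - u n x\<bar> < 1 / 3" "\<bar>\<phi> y - u n y\<bar> < 1 / 3"
      using n x y by simp_all
    ultimately have "\<phi> y \<noteq> 1"
      using \<phi>(2) by linarith
    then show "y \<in> W"
      using \<phi>(3) y by blast
  qed
  then show ?thesis
    by (intro exI[of _ n] exI[of _ "ball (u n x) (1 / 3)"]) simp
qed

lemma Tychonoff_uniformly_separable_imp_metrizable_space:
  assumes "Tychonoff_space X" "uniformly_separable X"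
  shows "metrizable_space X"
proof -
  obtain u :: "nat \<Rightarrow> 'a \<Rightarrow> real"
    where u: "\<And>n. u n \<in> CX X" "\<And>f r. f \<in> CX X \<Longrightarrow> 0 < r \<Longrightarrow> \<exists>n. f \<in> uball X (u n) r"
    by (rule uniformly_separable_dense_sequence[OF assms(2)]) blast
  have "completely_regular_space X" "Hausdorff_space X"
    using assms(1) by (simp_all add: Tychonoff_space_def)
  show ?thesis
  proof (rule separating_sequence_imp_metrizable_space[of X u])
    show "t1_space X"
      using \<open>Hausdorff_space X\<close> by (rule Hausdorff_imp_t1_space)
    show "continuous_map X euclideanreal (u n)" for n
      using u(1) by (simp add: CX_def)
    show "\<exists>n V. open V \<and> u n x \<in> V \<and> {y \<in> topspace X. u n y \<in> V} \<subseteq> W"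
      if "openin X W" "x \<in> W" for W x
      by (rule completely_regular_dense_sequence_separates[OF \<open>completely_regular_space X\<close> u(2) that])
  qed
qed

lemma uniformly_separable_closed_discrete_finite:
  assumes "normal_space X" "uniformly_separable X" "closedin X T"
    and discrete: "subtopology X T = discrete_topology T"
  shows "finite T"
proof (rule ccontr)
  assume "infinite T"
  then obtain t :: "nat \<Rightarrow> 'a" where t: "inj t" "range t \<subseteq> T"
    using infinite_countable_subset by blast
  obtain u :: "nat \<Rightarrow> 'a \<Rightarrow> real" where u: "\<And>n. u n \<in> CX X" "\<And>f r. f \<in> CX X \<Longrightarrow> 0 < r \<Longrightarrow> \<exists>n. f \<in> uball X (u n) r"
    by (rule uniformly_separable_dense_sequence[OF assms(2)]) blast
  define v where "v y = u (inv t y) y + 1" for y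
  have "continuous_map (subtopology X T) euclideanreal v"
    by (simp add: discrete)
  then obtain g where g: "continuous_map X euclideanreal g" "\<And>y. y \<in> T \<Longrightarrow> g y = v y"
    by (rule Tietze_extension_realinterval[OF assms(1,3) is_interval_univ UNIV_not_empty]) simp_all
  define g' where "g' x = (if x \<in> topspace X then g x else 0)" for x
  have "g' \<in> CX X"
    unfolding g'_def using g(1) by (rule CX_restrict)
  then obtain n where n: "g' \<in> uball X (u n) 1"
    using u(2)[OF _ zero_less_one] by blast
  have tn: "t n \<in> topspace X"
    using t(2) closedin_subset[OF assms(3)] by blast
  have "g' (t n) = u n (t n) + 1"
    using g(2)[of "t n"] t tn by (simp add: g'_def v_def inv_f_f range_subsetD)
  moreover have "\<bar>g' (t n) - u n (t n)\<bar> < 1"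
    using n tn by (simp add: strip_def)
  ultimately show False by simp
qed

lemma uniformly_separable_metrizable_imp_compact_space:
  assumes "metrizable_space X" "uniformly_separable X"
  shows "compact_space X"
proof -
  obtain M d where Md: "Metric_space M d" "X = Metric_space.mtopology M d"
    using assms(1) unfolding metrizable_space_def by blast
  have "Metric_space.mtopology M d derived_set_of S \<noteq> {}" if "S \<subseteq> M" "infinite S" for S
  proof
    assume derived: "Metric_space.mtopology M d derived_set_of S = {}"
    have "closedin X S"
      using that(1) derived Md by (simp add: closedin_contains_derived_set Metric_space.topspace_mtopology)
    moreover have "subtopology X S = discrete_topology S"
      using that(1) derived Md by (simp add: subtopology_eq_discrete_topology Metric_space.topspace_mtopology)
    ultimately have "finite S"
      using uniformly_separable_closed_discrete_finite metrizable_imp_normal_space assms by blast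
    with that(2) show False ..
  qed
  then show ?thesis
    using Metric_space.compact_space_eq_Bolzano_Weierstrass[OF Md(1)] Md(2) by blast
qed


lemma uniformly_separable_iff_compact_metrizable:
  assumes "Tychonoff_space X"
  shows "uniformly_separable X \<longleftrightarrow> compact_space X \<and> metrizable_space X"
proof
  assume "uniformly_separable X"
  moreover from this have "metrizable_space X"
    using assms by (rule Tychonoff_uniformly_separable_imp_metrizable_space[rotated])
  ultimately show "compact_space X \<and> metrizable_space X"
    using uniformly_separable_metrizable_imp_compact_space by blast
next
  assume X: "compact_space X \<and> metrizable_space X"
  then obtain M d where "Metric_space M d" "X = Metric_space.mtopology M d"
    unfolding metrizable_space_def by blast
  then have "X = mtopology_of (metric (M, d))"
    by (simp add: Metric_space.mtopology_of)
  with X show "uniformly_separable X"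
    using compact_mtopology_imp_uniformly_separable by blast
qed

text \<open>This covers \<open>C\<^sub>u\<close>, \<open>C\<^sub>m\<close> and \<open>C\<^sub>\<gamma>\<close>: all are finer than \<open>C\<^sub>u\<close> and coincide with it when
  \<open>X\<close> is compact.\<close>
lemma countability_properties_iff_uniformly_separable:
  assumes "Tychonoff_space X" "topspace T = CX X" "\<And>U. openin (Cu X) U \<Longrightarrow> openin T U"
    and T: "compact_space X \<Longrightarrow> T = Cu X"
  shows "(aleph0_bounded X T \<longleftrightarrow> uniformly_separable X)
    \<and> (separable_space T \<longleftrightarrow> uniformly_separable X)
    \<and> (ccc_space T \<longleftrightarrow> uniformly_separable X)
    \<and> (Lindelof_space T \<longleftrightarrow> uniformly_separable X)
    \<and> (second_countable T \<longleftrightarrow> uniformly_separable X)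
    \<and> (countable_network T \<longleftrightarrow> uniformly_separable X)"
proof -
  have sufficient: "aleph0_bounded X T \<and> second_countable T" if "uniformly_separable X"
  proof -
    have "compact_space X"
      using that uniformly_separable_iff_compact_metrizable[OF assms(1)] by blast
    with that have "aleph0_bounded X (Cu X)" "second_countable (Cu X)" "T = Cu X"
      by (simp_all add: uniformly_separable_imp_aleph0_bounded_Cu uniformly_separable_imp_second_countable_Cu T)
    then show ?thesis by simp
  qed
  have coarser: "topspace (Cu X) = topspace T"
    using assms(2) by simp
  have separable: "separable_space T \<longleftrightarrow> uniformly_separable X"
    using sufficient second_countable_imp_separable_space separable_Cu_imp_uniformly_separable
      separable_space_coarser[OF coarser assms(3)] by blast
  show ?thesis
  proof (intro conjI)
    show "aleph0_bounded X T \<longleftrightarrow> uniformly_separable X"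
      using sufficient aleph0_bounded_Cu_imp_uniformly_separable aleph0_bounded_coarser[OF assms(3)]
      by blast
    show "separable_space T \<longleftrightarrow> uniformly_separable X"
      by (fact separable)
    show "ccc_space T \<longleftrightarrow> uniformly_separable X"
      using separable separable_imp_ccc_space ccc_Cu_imp_uniformly_separable ccc_space_coarser[OF assms(3)]
      by blast
    show "Lindelof_space T \<longleftrightarrow> uniformly_separable X"
      using sufficient second_countable_imp_Lindelof_space Lindelof_Cu_imp_uniformly_separable
        Lindelof_space_coarser[OF coarser assms(3)] by blast
    show "second_countable T \<longleftrightarrow> uniformly_separable X"
      using sufficient separable second_countable_imp_separable_space by blast
    show "countable_network T \<longleftrightarrow> uniformly_separable X"
      using sufficient separable second_countable_imp_countable_network
        countable_network_imp_separable_space by blast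
  qed
qed

theorem theorem2p4:
  fixes X :: "'a topology"
  assumes "Tychonoff_space X"
  shows "(aleph0_bounded X (Cgamma X) \<longleftrightarrow> aleph0_bounded X (Cm X))
       \<and> (aleph0_bounded X (Cm X) \<longleftrightarrow> aleph0_bounded X (Cu X))
       \<and> (aleph0_bounded X (Cu X) \<longleftrightarrow> separable_space (Cu X))
       \<and> (separable_space (Cu X) \<longleftrightarrow> compact_space X \<and> metrizable_space X)
       \<and> (compact_space X \<and> metrizable_space X \<longleftrightarrow> second_countable (Cgamma X))
       \<and> (second_countable (Cgamma X) \<longleftrightarrow> countable_network (Cgamma X))
       \<and> (countable_network (Cgamma X) \<longleftrightarrow> separable_space (Cgamma X))
       \<and> (separable_space (Cgamma X) \<longleftrightarrow> ccc_space (Cgamma X))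
       \<and> (ccc_space (Cgamma X) \<longleftrightarrow> separable_space (Cm X))
       \<and> (separable_space (Cm X) \<longleftrightarrow> Lindelof_space (Cm X))
       \<and> (Lindelof_space (Cm X) \<longleftrightarrow> ccc_space (Cm X))"
proof -
  note props = countability_properties_iff_uniformly_separable[OF assms]
  show ?thesis
    using props[of "Cu X", OF topspace_Cu]
      props[of "Cm X", OF topspace_Cm openin_Cu_imp_openin_Cm Cm_eq_Cu]
      props[of "Cgamma X", OF topspace_Cgamma openin_Cu_imp_openin_Cgamma Cgamma_eq_Cu]
      uniformly_separable_iff_compact_metrizable[OF assms]
    by simp
qed

end
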